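(* The exponential generating function $f(x,y)=f(x,y;p,q)=\sum_{n\ge1}a_n(y;p,q)\frac{x^n}{n!}$ satisfies $$\frac{\partial}{\partial x}f(x,y)=ypq^2+\frac{ypq}{1-yp}\bigl(f(x,1)-f(x,yp)\bigr)+\frac{ypq^2}{1-ypq}\bigl(f(x,yp)-ypq\,f(xypq,1/q)\bigr).$$
   Context: An inversion sequence of length $n$ is a sequence $\rho=\rho_1\cdots\rho_n$ of integers with $1\le \rho_i\le i$ for all $i$. Let $I_{n,i}$ be the set of inversion sequences of length $n$ with last letter $i$. Represent $\rho$ as a bargraph whose $i$-th column has $\rho_i$ unit cells. Let $\mathrm{area}(\rho)=\rho_1+\cdots+\rho_n$ and let $\mathrm{sper}(\rho)$ be half the perimeter of the bargraph (bottom boundary included), i.e. $\mathrm{sper}(\rho)=n+\rho_1+\sum_{i=1}^{n-1}\max(\rho_{i+1}-\rho_i,0)$. Define $a_{n,i}(p,q)=\sum_{\rho\in I_{n,i}}p^{\mathrm{area}(\rho)}q^{\mathrm{sper}(\rho)}$ and $a_n(y;p,q)=\sum_{i=1}^n a_{n,i}(p,q)y^i$. *)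

theory Defs
  imports Complex_Main "HOL-Computational_Algebra.Formal_Power_Series"
begin

text \<open>Inversion sequences of length n, as lists rho with rho!(i-1) = rho_i,
  so 1 \<le> rho!i \<le> i+1 for i < n.\<close>
definition inv_seqs :: "nat \<Rightarrow> nat list set" where
  "inv_seqs n = {rho. length rho = n \<and> (\<forall>i<n. 1 \<le> rho ! i \<and> rho ! i \<le> Suc i)}"

definition inv_seqs_last :: "nat \<Rightarrow> nat \<Rightarrow> nat list set" where
  "inv_seqs_last n i = {rho \<in> inv_seqs n. last rho = i}"

definition area :: "nat list \<Rightarrow> nat" where
  "area rho = sum_list rho"

text \<open>Semi-perimeter: n + rho_1 + sum_{i=1}^{n-1} max(rho_{i+1} - rho_i, 0).
  Truncated subtraction on nat is exactly max(_ - _, 0).\<close>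
definition sper :: "nat list \<Rightarrow> nat" where
  "sper rho = length rho + rho ! 0
     + (\<Sum>i < length rho - 1. rho ! Suc i - rho ! i)"

definition a_ni :: "nat \<Rightarrow> nat \<Rightarrow> real \<Rightarrow> real \<Rightarrow> real" where
  "a_ni n i p q = (\<Sum>rho \<in> inv_seqs_last n i. p ^ area rho * q ^ sper rho)"

definition a_n :: "nat \<Rightarrow> real \<Rightarrow> real \<Rightarrow> real \<Rightarrow> real" where
  "a_n n y p q = (\<Sum>i = 1..n. a_ni n i p q * y ^ i)"

definition egf :: "real \<Rightarrow> real \<Rightarrow> real \<Rightarrow> real fps" where
  "egf y p q = Abs_fps (\<lambda>n. if n = 0 then 0 else a_n n y p q / fact n)"

end

theory Submission
  imports Defs
begin

text \<open>Appending a letter \<open>j\<close> to an inversion sequence with last letter \<open>i\<close> adds \<open>j\<close> to the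
  area and \<open>1 + max(j - i, 0)\<close> to the semi-perimeter.  Hence summing over the new last
  letter splits at \<open>j = i\<close> into two geometric series in \<open>yp\<close> and \<open>ypq\<close>, whose closed forms
  express \<open>a\<^sub>n\<^sub>+\<^sub>1(y)\<close> through \<open>a\<^sub>n(1)\<close>, \<open>a\<^sub>n(yp)\<close> and \<open>(ypq)\<^sup>n\<^sup>+\<^sup>1 a\<^sub>n(1/q)\<close>.
  The last term is the coefficient of the substitution \<open>x \<mapsto> ypq x\<close>, and the recurrence
  is the coefficientwise form of the differential equation.\<close>

unbundle fps_syntax

lemma finite_inv_seqs: "finite (inv_seqs n)"
proof (rule finite_subset)
  show "inv_seqs n \<subseteq> {xs. set xs \<subseteq> {0..n} \<and> length xs = n}"
    by (auto simp: inv_seqs_def in_set_conv_nth) (meson Suc_leI order_trans)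
  show "finite {xs. set xs \<subseteq> {0..n} \<and> length xs = n}"
    by (rule finite_lists_length_eq) simp
qed

lemma last_inv_seqs:
  assumes "rho \<in> inv_seqs n" "0 < n"
  shows "last rho \<in> {1..n}"
proof -
  have "length rho = n" "\<forall>i<n. 1 \<le> rho ! i \<and> rho ! i \<le> Suc i"
    using assms(1) by (auto simp: inv_seqs_def)
  moreover from this have "last rho = rho ! (n - 1)"
    using assms(2) by (auto simp: last_conv_nth)
  ultimately show ?thesis
    using assms(2) by (metis One_nat_def Suc_pred atLeastAtMost_iff diff_less zero_less_one)
qed

lemma a_n_eq_sum_inv_seqs:
  assumes "0 < n"
  shows "a_n n y p q = (\<Sum>rho\<in>inv_seqs n. p ^ area rho * q ^ sper rho * y ^ last rho)"
proof -
  have "a_n n y p q = (\<Sum>i\<in>{1..n}. \<Sum>rho\<in>{rho \<in> inv_seqs n. last rho = i}.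
      p ^ area rho * q ^ sper rho * y ^ last rho)"
    unfolding a_n_def a_ni_def inv_seqs_last_def sum_distrib_right by (intro sum.cong) auto
  also have "\<dots> = (\<Sum>rho\<in>inv_seqs n. p ^ area rho * q ^ sper rho * y ^ last rho)"
    by (rule sum.group) (use finite_inv_seqs last_inv_seqs assms in auto)
  finally show ?thesis .
qed

lemma inv_seqs_0: "inv_seqs 0 = {[]}"
  by (auto simp: inv_seqs_def)

lemma inv_seqs_Suc:
  "inv_seqs (Suc n) = (\<lambda>(rho, j). rho @ [j]) ` (inv_seqs n \<times> {1..Suc n})"
proof (intro equalityI subsetI)
  fix xs assume xs: "xs \<in> inv_seqs (Suc n)"
  then have "xs \<noteq> []" "butlast xs \<in> inv_seqs n"
    by (auto simp: inv_seqs_def nth_butlast)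
  moreover have "last xs \<in> {1..Suc n}" using last_inv_seqs[OF xs] by simp
  ultimately show "xs \<in> (\<lambda>(rho, j). rho @ [j]) ` (inv_seqs n \<times> {1..Suc n})"
    by (intro image_eqI[of _ _ "(butlast xs, last xs)"]) simp_all
next
  fix xs assume "xs \<in> (\<lambda>(rho, j). rho @ [j]) ` (inv_seqs n \<times> {1..Suc n})"
  then show "xs \<in> inv_seqs (Suc n)"
    by (auto simp: inv_seqs_def nth_append less_Suc_eq)
qed

lemma sum_inv_seqs_Suc:
  "(\<Sum>rho\<in>inv_seqs (Suc n). f rho) = (\<Sum>rho\<in>inv_seqs n. \<Sum>j=1..Suc n. f (rho @ [j]))"
proof -
  have "inj_on (\<lambda>(rho, j). rho @ [j]) (inv_seqs n \<times> {1..Suc n})"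
    by (auto simp: inj_on_def)
  then show ?thesis
    by (simp add: inv_seqs_Suc sum.reindex sum.cartesian_product case_prod_beta' del: sum.cl_ivl_Suc)
qed

lemma area_snoc: "area (rho @ [j]) = area rho + j"
  by (simp add: area_def)

lemma sper_snoc:
  assumes "rho \<noteq> []"
  shows "sper (rho @ [j]) = sper rho + 1 + (j - last rho)"
proof -
  obtain k where k: "length rho = Suc k" using assms by (cases rho) auto
  then have "last rho = rho ! k" using assms by (simp add: last_conv_nth)
  then show ?thesis using k by (simp add: sper_def nth_append)
qed

lemma a_n_1: "a_n 1 y p q = y * p * q^2"
proof -
  have "inv_seqs 1 = {[1]}" using inv_seqs_Suc[of 0] by (simp add: inv_seqs_0)
  then show ?thesis by (simp add: a_n_eq_sum_inv_seqs area_def sper_def power2_eq_square)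
qed

lemma sum_power_mult_power_diff:
  fixes r q :: "'a::field"
  assumes "i \<le> m" "q \<noteq> 0" "r \<noteq> 1" "r * q \<noteq> 1"
  shows "(\<Sum>j=1..m. r^j * q^(1 + (j - i))) =
    r*q/(1-r) * (1 - r^i) + r*q^2/(1-r*q) * (r^i - (r*q)^m * (1/q)^i)"
proof -
  have "{1..m} = {1..i} \<union> {Suc i..m}" using assms(1) by auto
  then have "(\<Sum>j=1..m. r^j * q^(1 + (j - i))) =
      (\<Sum>j=1..i. r^j * q^(1 + (j - i))) + (\<Sum>j=Suc i..m. r^j * q^(1 + (j - i)))"
    by (simp add: sum.union_disjoint)
  also have "\<dots> = q * (\<Sum>j=1..i. r^j) + q / q^i * (\<Sum>j=Suc i..m. (r*q)^j)"
  proof -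
    have "r^j * q^(1 + (j - i)) = q / q^i * (r*q)^j" if "i < j" for j
      using that assms(2) by (simp add: power_add[symmetric] power_mult_distrib field_simps
          flip: le_add_diff_inverse2)
    then show ?thesis by (simp add: sum_distrib_left mult.commute)
  qed
  also have "\<dots> = q * ((r - r^Suc i) / (1-r)) + q / q^i * (((r*q)^Suc i - (r*q)^Suc m) / (1-r*q))"
    using assms by (auto simp: sum_gp less_Suc_eq_le dest: le_antisym)
  also have "\<dots> = r*q/(1-r) * (1 - r^i) + r*q^2/(1-r*q) * (r^i - (r*q)^m * (1/q)^i)"
  proof -
    have "1 - r \<noteq> 0" "1 - r*q \<noteq> 0" using assms by auto
    then show ?thesis
      using assms by (simp add: power_mult_distrib power_one_over power2_eq_square field_simps)
  qed
  finally show ?thesis .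
qed

lemma a_n_Suc:
  fixes y p q :: real
  assumes "q \<noteq> 0" "y * p \<noteq> 1" "y * p * q \<noteq> 1" "0 < n"
  shows "a_n (Suc n) y p q =
      y * p * q / (1 - y * p) * (a_n n 1 p q - a_n n (y * p) p q)
    + y * p * q^2 / (1 - y * p * q) *
        (a_n n (y * p) p q - (y * p * q) ^ Suc n * a_n n (1 / q) p q)"
proof -
  let ?w = "\<lambda>rho. p ^ area rho * q ^ sper rho"
  let ?c1 = "y * p * q / (1 - y * p)" and ?c2 = "y * p * q^2 / (1 - y * p * q)"
  have append_letter:
    "(\<Sum>j=1..Suc n. ?w (rho @ [j]) * y ^ last (rho @ [j])) =
      ?c1 * (?w rho * 1 ^ last rho - ?w rho * (y * p) ^ last rho)
    + ?c2 * (?w rho * (y * p) ^ last rho - (y * p * q) ^ Suc n * (?w rho * (1 / q) ^ last rho))"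
    if "rho \<in> inv_seqs n" for rho
  proof -
    have "rho \<noteq> []" "last rho \<le> Suc n"
      using that last_inv_seqs[OF that] assms(4) by (auto simp: inv_seqs_def)
    then have "(\<Sum>j=1..Suc n. ?w (rho @ [j]) * y ^ last (rho @ [j])) =
        ?w rho * (\<Sum>j=1..Suc n. (y * p) ^ j * q ^ (1 + (j - last rho)))"
      by (simp add: area_snoc sper_snoc power_add power_mult_distrib sum_distrib_left mult_ac
          del: sum.cl_ivl_Suc)
    also have "\<dots> = ?w rho * (?c1 * (1 - (y * p) ^ last rho)
        + ?c2 * ((y * p) ^ last rho - (y * p * q) ^ Suc n * (1 / q) ^ last rho))"
      using sum_power_mult_power_diff[OF \<open>last rho \<le> Suc n\<close> assms(1-3)]
      by (simp only: mult.assoc)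
    also have "\<dots> = ?c1 * (?w rho * 1 ^ last rho - ?w rho * (y * p) ^ last rho)
      + ?c2 * (?w rho * (y * p) ^ last rho - (y * p * q) ^ Suc n * (?w rho * (1 / q) ^ last rho))"
      by (simp only: power_one mult_1_right ring_distribs mult_ac)
    finally show ?thesis .
  qed
  have "a_n (Suc n) y p q = (\<Sum>rho\<in>inv_seqs n.
        ?c1 * (?w rho * 1 ^ last rho - ?w rho * (y * p) ^ last rho)
      + ?c2 * (?w rho * (y * p) ^ last rho - (y * p * q) ^ Suc n * (?w rho * (1 / q) ^ last rho)))"
    unfolding a_n_eq_sum_inv_seqs[OF zero_less_Suc] sum_inv_seqs_Suc
    by (intro sum.cong refl append_letter)
  also have "\<dots> = ?c1 * (a_n n 1 p q - a_n n (y * p) p q)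
      + ?c2 * (a_n n (y * p) p q - (y * p * q) ^ Suc n * a_n n (1 / q) p q)"
    unfolding a_n_eq_sum_inv_seqs[OF assms(4)]
    by (simp only: sum.distrib sum_subtractf flip: sum_distrib_left)
  finally show ?thesis .
qed

lemma egf_nth: "egf y p q $ n = (if n = 0 then 0 else a_n n y p q / fact n)"
  by (simp add: egf_def)

lemma fps_deriv_egf_nth: "fps_deriv (egf y p q) $ n = a_n (Suc n) y p q / fact n"
  by (simp add: egf_nth field_simps del: of_nat_Suc)

theorem theorem2p2:
  fixes y p q :: real
  assumes "q \<noteq> 0" and "y * p \<noteq> 1" and "y * p * q \<noteq> 1"
  shows "fps_deriv (egf y p q) =
      fps_const (y * p * q ^ 2)
    + fps_const (y * p * q / (1 - y * p)) * (egf 1 p q - egf (y * p) p q)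
    + fps_const (y * p * q ^ 2 / (1 - y * p * q)) *
        (egf (y * p) p q
         - fps_const (y * p * q) * fps_compose (egf (1 / q) p q) (fps_const (y * p * q) * fps_X))"
proof (rule fps_ext)
  fix n
  show "fps_deriv (egf y p q) $ n = (fps_const (y * p * q ^ 2)
    + fps_const (y * p * q / (1 - y * p)) * (egf 1 p q - egf (y * p) p q)
    + fps_const (y * p * q ^ 2 / (1 - y * p * q)) *
        (egf (y * p) p q
         - fps_const (y * p * q) * fps_compose (egf (1 / q) p q) (fps_const (y * p * q) * fps_X))) $ n"
  proof (cases n)
    case 0
    then show ?thesis unfolding fps_deriv_egf_nth by (simp add: egf_nth a_n_1 flip: One_nat_def)
  next
    case (Suc m)
    have "fps_deriv (egf y p q) $ n = a_n (Suc n) y p q / fact n"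
      by (rule fps_deriv_egf_nth)
    also have "\<dots> = (y * p * q / (1 - y * p) * (a_n n 1 p q - a_n n (y * p) p q)
      + y * p * q^2 / (1 - y * p * q) *
          (a_n n (y * p) p q - (y * p * q) ^ Suc n * a_n n (1 / q) p q)) / fact n"
      using a_n_Suc[OF assms] Suc by simp
    finally show ?thesis
      using Suc by (simp add: egf_nth del: fact_Suc)
        (simp add: algebra_simps add_divide_distrib diff_divide_distrib)
  qed
qed

end
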